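(* Let $\gamma\in\mathbb{C}$ with $\Re\gamma>0$ and $\Im\gamma<0$, and let $N>|\gamma|/\pi$ be an integer. Then the integral \[ \int_{\mathcal{R}}\frac{e^{(2z-1)x}}{x\sinh(x)\sinh(\gamma x/N)}\,dx \] converges if $-\frac{\Re\gamma}{2N}<\Re z<1+\frac{\Re\gamma}{2N}$.
   Context: $\mathcal{R}:=(-\infty,-1]\cup\{w\in\mathbb{C}:|w|=1,\Im w\ge0\}\cup[1,\infty)$, oriented from $-\infty$ to $\infty$. *)

theory Defs
  imports "HOL-Complex_Analysis.Complex_Analysis"
begin

definition R_integrand :: "complex \<Rightarrow> int \<Rightarrow> complex \<Rightarrow> complex \<Rightarrow> complex" where
  "R_integrand \<gamma> N z x =
     exp ((2 * z - 1) * x) / (x * sinh x * sinh (\<gamma> * x / of_int N))"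

definition R_arc :: "real \<Rightarrow> complex" where
  "R_arc = part_circlepath 0 1 pi 0"

text \<open>Convergence of the integral of g along R = (-inf,-1] + upper unit half circle + [1,inf):
  each of the three pieces is integrable (the two rays as (improper) integrals on unbounded
  intervals, the arc as a contour integral).\<close>
definition integral_along_R_converges :: "(complex \<Rightarrow> complex) \<Rightarrow> bool" where
  "integral_along_R_converges g \<longleftrightarrow>
     (\<lambda>t::real. g (complex_of_real t)) integrable_on {..-1} \<and>
     g contour_integrable_on R_arc \<and>
     (\<lambda>t::real. g (complex_of_real t)) integrable_on {1..}"

end

theory Submission
  imports Defs
begin

text \<open>Since |sinh u| \<ge> sinh (Re u), on [1,\<infinity>) the denominator grows at least like
  e^((1 + Re \<gamma>/N) t), so the integrand is dominated by a decaying exponential as soon as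
  Re z < 1 + Re \<gamma>/(2N). The substitution x \<mapsto> -x, z \<mapsto> 1 - z only changes the sign of the
  integrand, which turns the other bound on Re z into convergence on (-\<infinity>,-1]. On the unit
  half circle |x| and |\<gamma> x / N| are below \<pi>, so neither sinh vanishes there and the integrand
  is continuous.\<close>

lemma absolutely_integrable_on_reflect_real:
  fixes f :: "real \<Rightarrow> 'a::euclidean_space"
  assumes "f absolutely_integrable_on uminus ` S"
  shows "(\<lambda>x. f (-x)) absolutely_integrable_on S"
proof -
  have "integrable lebesgue (\<lambda>x. indicator (uminus ` S) x *\<^sub>R f x)"
    using assms unfolding set_integrable_def .
  then have "integrable lebesgue (\<lambda>x. indicator (uminus ` S) (0 + (-1) * x) *\<^sub>R f (0 + (-1) * x))"
    by (subst lebesgue_integrable_real_affine_iff) auto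
  moreover have "indicator (uminus ` S) (-x) = (indicator S x :: real)" for x
    by (simp add: indicator_def image_iff)
  ultimately show ?thesis
    unfolding set_integrable_def by simp
qed

lemma sinh_Re_le_norm_sinh: "sinh (Re u) \<le> norm (sinh u :: complex)"
proof -
  have "sinh (Re u) = (norm (exp u) - norm (exp (-u))) / 2"
    by (simp add: sinh_def)
  also have "\<dots> \<le> norm (exp u - exp (-u)) / 2"
    using norm_triangle_ineq2[of "exp u" "exp (-u)"] by simp
  also have "\<dots> = norm (sinh u)"
    by (simp add: sinh_def)
  finally show ?thesis .
qed

lemma sinh_mult_ge_exp:
  fixes a t :: real
  assumes "a > 0" "t \<ge> 1"
  shows "(1 - exp (-2 * a)) / 2 * exp (a * t) \<le> sinh (a * t)"
proof -
  have "exp (- (a * t)) \<le> exp (a * t - 2 * a)"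
    using assms by (intro exp_mono) (simp add: algebra_simps mult_left_mono)
  also have "\<dots> = exp (-2 * a) * exp (a * t)"
    by (simp add: exp_add[symmetric])
  finally show ?thesis
    by (simp add: sinh_def algebra_simps diff_divide_distrib)
qed

lemma norm_sinh_mult_of_real_ge:
  fixes w :: complex and t :: real
  assumes "Re w > 0" "t \<ge> 1"
  shows "(1 - exp (-2 * Re w)) / 2 * exp (Re w * t) \<le> norm (sinh (w * t))"
  using sinh_mult_ge_exp[OF assms] sinh_Re_le_norm_sinh[of "w * t"] by simp

lemma sinh_nonzero_if_norm_less_pi:
  fixes u :: complex
  assumes "u \<noteq> 0" "norm u < pi"
  shows "sinh u \<noteq> 0"
proof
  assume "sinh u = 0"
  then have "exp u = exp (-u)"
    by (simp add: sinh_def)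
  then have "exp (2 * u) = 1"
    by (metis exp_add exp_minus_inverse mult_2)
  then obtain n :: int where "Re (2 * u) = 0" and "Im (2 * u) = of_int (2 * n) * pi"
    using exp_eq_1 by blast
  then have re: "Re u = 0" and im: "Im u = of_int n * pi"
    by simp_all
  have "\<bar>Im u\<bar> < pi"
    using abs_Im_le_cmod[of u] assms(2) by linarith
  then have "\<bar>real_of_int n\<bar> * pi < 1 * pi"
    by (simp add: im abs_mult)
  then have "n = 0"
    by simp
  with re im assms(1) show False
    by (simp add: complex_eq_iff)
qed

lemma R_integrand_uminus: "R_integrand \<gamma> N z (-x) = - R_integrand \<gamma> N (1 - z) x"
  unfolding R_integrand_def by (simp add: sinh_minus algebra_simps)

lemma R_integrand_absolutely_integrable_atLeast:
  assumes \<gamma>: "Re \<gamma> > 0" and N: "N > 0" and z: "Re z < 1 + Re \<gamma> / (2 * N)"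
  shows "(\<lambda>t::real. R_integrand \<gamma> N z t) absolutely_integrable_on {1..}"
proof -
  define w where "w = \<gamma> / of_int N"
  define C where "C = 4 / ((1 - exp (-2)) * (1 - exp (-2 * Re w)))"
  define b where "b = 2 + Re w - 2 * Re z"
  have w: "Re w > 0" and "b > 0"
    using \<gamma> N z by (simp_all add: w_def b_def field_simps)
  have "C > 0"
    using w by (simp add: C_def)
  have integrand:
    "R_integrand \<gamma> N z t = exp ((2 * z - 1) * t) / (t * sinh (complex_of_real t) * sinh (w * t))"
    for t :: real
    by (simp add: R_integrand_def w_def)
  have denominator: "exp ((1 + Re w) * t) / C \<le> norm (t * sinh (complex_of_real t) * sinh (w * t))"
    if "t \<ge> 1" for t :: real
  proof -
    have "exp ((1 + Re w) * t) / C
        = 1 * ((1 - exp (-2)) / 2 * exp t) * ((1 - exp (-2 * Re w)) / 2 * exp (Re w * t))"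
      by (simp add: C_def field_simps flip: exp_add)
    also have "\<dots> \<le> norm (complex_of_real t) * norm (sinh (complex_of_real t)) * norm (sinh (w * t))"
      using that w norm_sinh_mult_of_real_ge[of 1 t] norm_sinh_mult_of_real_ge[of w t]
      by (intro mult_mono) simp_all
    finally show ?thesis
      by (simp add: norm_mult)
  qed
  have nonzero: "t * sinh (complex_of_real t) * sinh (w * t) \<noteq> 0" if "t \<ge> 1" for t :: real
    using denominator[OF that] \<open>C > 0\<close> by (metis divide_pos_pos exp_gt_zero norm_zero not_le)
  have bound: "norm (R_integrand \<gamma> N z t) \<le> C * exp (- b * t)" if "t \<ge> 1" for t :: real
  proof -
    have "norm (R_integrand \<gamma> N z t)
        = exp ((2 * Re z - 1) * t) / norm (t * sinh (complex_of_real t) * sinh (w * t))"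
      by (simp add: integrand norm_divide)
    also have "\<dots> \<le> exp ((2 * Re z - 1) * t) / (exp ((1 + Re w) * t) / C)"
      using denominator[OF that] nonzero[OF that] \<open>C > 0\<close>
      by (intro divide_left_mono mult_pos_pos) simp_all
    also have "\<dots> = C * exp (- b * t)"
      by (simp add: b_def field_simps flip: exp_add)
    finally show ?thesis .
  qed
  have "continuous_on {1..} (\<lambda>t::real. R_integrand \<gamma> N z t)"
    unfolding integrand using nonzero by (intro continuous_intros) auto
  then show ?thesis
  proof (rule measurable_bounded_by_integrable_imp_absolutely_integrable
           [OF continuous_imp_measurable_on_sets_lebesgue])
    show "(\<lambda>t. C * exp (- b * t)) integrable_on {1..}"
      using has_integral_exp_minus_to_infinity[OF \<open>b > 0\<close>, of 1]
      by (intro integrable_cmul[where 'b=real, simplified]) (auto simp: integrable_on_def)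
  qed (use bound in auto)
qed

lemma R_integrand_absolutely_integrable_atMost:
  assumes "Re \<gamma> > 0" and "N > 0" and "- Re \<gamma> / (2 * N) < Re z"
  shows "(\<lambda>t::real. R_integrand \<gamma> N z t) absolutely_integrable_on {..-1}"
proof -
  have "uminus ` {..-1} = {1::real..}"
    by (auto simp: image_iff intro: bexI[of _ "- _"])
  then have "(\<lambda>t::real. R_integrand \<gamma> N (1 - z) t) absolutely_integrable_on uminus ` {..-1}"
    using assms by (auto intro: R_integrand_absolutely_integrable_atLeast)
  then have "(\<lambda>t::real. R_integrand \<gamma> N (1 - z) (of_real (-t))) absolutely_integrable_on {..-1}"
    by (rule absolutely_integrable_on_reflect_real)
  moreover have "R_integrand \<gamma> N (1 - z) (of_real (-t)) = - R_integrand \<gamma> N z t" for t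
    by (simp add: R_integrand_uminus)
  ultimately have "(\<lambda>t::real. - R_integrand \<gamma> N z t) absolutely_integrable_on {..-1}"
    by simp
  from set_integrable_mult_right[of "-1", OF this] show ?thesis
    by simp
qed

lemma R_integrand_contour_integrable_R_arc:
  assumes "\<gamma> \<noteq> 0" and N: "real_of_int N > cmod \<gamma> / pi"
  shows "R_integrand \<gamma> N z contour_integrable_on R_arc"
proof -
  have "N > 0"
    using N divide_nonneg_pos[OF norm_ge_zero pi_gt_zero, of \<gamma>] by linarith
  have "x * sinh x * sinh (\<gamma> * x / of_int N) \<noteq> 0" if "x \<in> sphere 0 1" for x :: complex
  proof -
    have x: "norm x = 1" "x \<noteq> 0"
      using that by auto
    have "norm (\<gamma> * x / of_int N) = cmod \<gamma> / real_of_int N"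
      using x \<open>N > 0\<close> by (simp add: norm_mult norm_divide)
    also have "\<dots> < pi"
      using N \<open>N > 0\<close> pi_gt_zero by (simp add: field_simps)
    finally have "sinh (\<gamma> * x / of_int N) \<noteq> 0"
      using x assms(1) \<open>N > 0\<close> by (intro sinh_nonzero_if_norm_less_pi) auto
    moreover have "sinh x \<noteq> 0"
      using x pi_gt3 by (intro sinh_nonzero_if_norm_less_pi) auto
    ultimately show ?thesis
      using x by simp
  qed
  then have "continuous_on (sphere 0 1) (R_integrand \<gamma> N z)"
    unfolding R_integrand_def by (intro continuous_intros) auto
  then show ?thesis
    unfolding R_arc_def
    by (rule contour_integrable_continuous_part_circlepath[OF continuous_on_subset])
       (use path_image_part_circlepath_subset' in simp)
qed

theorem lemma2p1:
  fixes \<gamma> z :: complex and N :: int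
  assumes "Re \<gamma> > 0" and "Im \<gamma> < 0"
    and "real_of_int N > cmod \<gamma> / pi"
    and "- Re \<gamma> / (2 * real_of_int N) < Re z"
    and "Re z < 1 + Re \<gamma> / (2 * real_of_int N)"
  shows "integral_along_R_converges (R_integrand \<gamma> N z)"
proof -
  have "N > 0"
    using assms(3) divide_nonneg_pos[OF norm_ge_zero pi_gt_zero, of \<gamma>] by linarith
  have "\<gamma> \<noteq> 0"
    using assms(1) by auto
  have "(\<lambda>t::real. R_integrand \<gamma> N z t) absolutely_integrable_on {..-1}"
    using assms(1) \<open>N > 0\<close> assms(4) by (rule R_integrand_absolutely_integrable_atMost)
  moreover have "(\<lambda>t::real. R_integrand \<gamma> N z t) absolutely_integrable_on {1..}"
    using assms(1) \<open>N > 0\<close> assms(5) by (rule R_integrand_absolutely_integrable_atLeast)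
  moreover have "R_integrand \<gamma> N z contour_integrable_on R_arc"
    using \<open>\<gamma> \<noteq> 0\<close> assms(3) by (rule R_integrand_contour_integrable_R_arc)
  ultimately show ?thesis
    unfolding integral_along_R_converges_def by (simp add: set_lebesgue_integral_eq_integral(1))
qed

end
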